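(* Consider the system \[ x_{k+1} = x_k - \rho y_k + \hat g(y_k,w_k),\qquad y_{k+1} = (1-\beta)y_k + \hat h(y_{k-1},w_{k-1})\bigl(J(x_k)-J(x_{k-1})\bigr) \] with the setup described in the context. Then for every $k\ge1$, \[ \mathbb{E}[\tilde x_{k+1}^2]=\mathbb{E}[\tilde x_k^2]+(\psi+\rho^2)\mathbb{E}[y_k^2]-2\rho\,\mathbb{E}[\tilde x_ky_k]+\varepsilon\psi\bigl(\varepsilon+2\mathbb{E}[|y_k|]\bigr), \] and \[ \begin{aligned} \mathbb{E}[y_{k+1}^2]&=(1-\beta)^2\mathbb{E}[y_k^2]+2(1-\beta)\mu\gamma\,\mathbb{E}[\tilde x_ky_k]+\mu^2(\rho^2\chi+\gamma^2)\mathbb{E}[\tilde x_{k-1}^2]\\ &\quad-\mu^2\rho(3\gamma^2+\rho^2\chi)\mathbb{E}[\tilde x_{k-1}y_{k-1}]+\frac{\mu^2(\rho^4\chi+\gamma^2\psi+6\gamma^2\rho^2)}{4}\mathbb{E}[y_{k-1}^2]+R_y(\varepsilon), \end{aligned} \] where \[ \begin{aligned} R_y(\varepsilon)&:=\mu^2\varepsilon\Bigl(\frac{\gamma^2\psi}{4}\bigl(\varepsilon+2\mathbb{E}[|y_{k-1}|]\bigr)-\frac{\rho^2\chi}{2}\mathbb{E}\bigl[T_1(y_{k-1},\varepsilon)(\tilde x_k^2+\tilde x_{k-1}^2)\bigr]\\ &\qquad+\frac{\rho^2(\rho^2\chi+2\gamma^2)}{4}\mathbb{E}\bigl[T_1(y_{k-1},\varepsilon)y_{k-1}^2\bigr]+\frac{\rho^2\gamma^2}{2}\mathbb{E}\bigl[T_2(y_{k-1},\varepsilon)\bigr]\Bigr),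 \end{aligned} \] with $T_1(y,\varepsilon):=\frac{\varepsilon+2|y|}{(|y|+\varepsilon)^2}$ and $T_2(y,\varepsilon):=\frac{\varepsilon(\varepsilon+2|y|)^2}{(|y|+\varepsilon)^2}$.
   Context: Setup. Parameters: $\rho>0$, $\beta\in(0,2)$, $\varepsilon>0$, $\omega>0$. The random variables $w_i$, $i\in\mathbb{N}\cup\{0\}$, are i.i.d., each taking the value $-\omega$ or $\omega$ with probability $1/2$. The functions $h,g:\mathbb{R}\to\mathbb{R}$ are odd, satisfy $\mathrm{sign}(g(w))=\mathrm{sign}(h(w))$ for all $w$, and $g(w)=h(w)=0$ if and only if $w=0$. Define $\hat h(y,w):=\frac{h(w)}{|y|+\varepsilon}$ and $\hat g(y,w):=(|y|+\varepsilon)g(w)$. The objective is $J(x)=J^*+\frac{\mu}{2}(x-x^* )^2$ with $\mu>0$, $x^*,J^*\in\mathbb{R}$. The initial data $x_0,y_0$ and the initialization $y_1$ (the $y$-update being applied for $k\ge1$) are deterministic. Notation: $\tilde x_k:=x_k-x^*$, $\chi:=\mathbb{E}[h(w_k)^2]$, $\psi:=\mathbb{E}[g(w_k)^2]$, $\gamma:=\mathbb{E}[h(w_k)g(w_k)]=\sqrt{\chi\psi}$. *)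

theory Defs
  imports "HOL-Probability.Probability"
begin

definition hat_h :: "(real \<Rightarrow> real) \<Rightarrow> real \<Rightarrow> real \<Rightarrow> real \<Rightarrow> real" where
  "hat_h h eps y w = h w / (\<bar>y\<bar> + eps)"

definition hat_g :: "(real \<Rightarrow> real) \<Rightarrow> real \<Rightarrow> real \<Rightarrow> real \<Rightarrow> real" where
  "hat_g g eps y w = (\<bar>y\<bar> + eps) * g w"

text \<open>Trajectory (x_k, y_k) driven by a given realisation w of the noise sequence. The x-update holds for k \<ge> 0,
  the y-update for k \<ge> 1 (y_1 is a given deterministic initialisation).\<close>
fun xseq :: "real \<Rightarrow> real \<Rightarrow> real \<Rightarrow> (real \<Rightarrow> real) \<Rightarrow> (real \<Rightarrow> real) \<Rightarrow> (real \<Rightarrow> real)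
      \<Rightarrow> real \<Rightarrow> real \<Rightarrow> real \<Rightarrow> (nat \<Rightarrow> real) \<Rightarrow> nat \<Rightarrow> real"
and yseq :: "real \<Rightarrow> real \<Rightarrow> real \<Rightarrow> (real \<Rightarrow> real) \<Rightarrow> (real \<Rightarrow> real) \<Rightarrow> (real \<Rightarrow> real)
      \<Rightarrow> real \<Rightarrow> real \<Rightarrow> real \<Rightarrow> (nat \<Rightarrow> real) \<Rightarrow> nat \<Rightarrow> real" where
  "xseq rho beta eps J h g x0 y0 y1 w 0 = x0"
| "xseq rho beta eps J h g x0 y0 y1 w (Suc k) =
     xseq rho beta eps J h g x0 y0 y1 w k - rho * yseq rho beta eps J h g x0 y0 y1 w k
     + hat_g g eps (yseq rho beta eps J h g x0 y0 y1 w k) (w k)"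
| "yseq rho beta eps J h g x0 y0 y1 w 0 = y0"
| "yseq rho beta eps J h g x0 y0 y1 w (Suc 0) = y1"
| "yseq rho beta eps J h g x0 y0 y1 w (Suc (Suc k)) =
     (1 - beta) * yseq rho beta eps J h g x0 y0 y1 w (Suc k)
     + hat_h h eps (yseq rho beta eps J h g x0 y0 y1 w k) (w k)
       * (J (xseq rho beta eps J h g x0 y0 y1 w (Suc k)) - J (xseq rho beta eps J h g x0 y0 y1 w k))"

definition T1 :: "real \<Rightarrow> real \<Rightarrow> real" where
  "T1 y eps = (eps + 2 * \<bar>y\<bar>) / (\<bar>y\<bar> + eps)^2"

definition T2 :: "real \<Rightarrow> real \<Rightarrow> real" where
  "T2 y eps = eps * (eps + 2 * \<bar>y\<bar>)^2 / (\<bar>y\<bar> + eps)^2"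

end

theory Submission
  imports Defs
begin

(* Both identities are pathwise identities averaged over a single coin. Since the coins are
   independent and uniform on {-\<omega>, \<omega>}, the expectation of a function of w_0, ..., w_(m-1) is
   its average over the 2^m sign patterns; splitting off the last coin, it vanishes whenever the
   function changes sign when that coin is flipped. In the x-identity the newest coin w_k enters
   only through g(w_k), in the y-identity the coin w_(k-1) enters only through h(w_(k-1)) and
   g(w_(k-1)). As h and g are odd, flipping the coin flips the signs of these values, and each
   claim reduces to a polynomial identity with chi = h(\<omega>)^2, psi = g(\<omega>)^2, gam = h(\<omega>) g(\<omega>). *)

definition prefix_determined :: "nat \<Rightarrow> ((nat \<Rightarrow> 'a) \<Rightarrow> 'b) \<Rightarrow> bool" where
  "prefix_determined m F \<longleftrightarrow> (\<forall>w w'. (\<forall>i<m. w i = w' i) \<longrightarrow> F w = F w')"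

lemma sum_PiE_lessThan_Suc:
  "(\<Sum>\<tau>\<in>Pi\<^sub>E {..<Suc n} A. F \<tau>) = (\<Sum>\<tau>\<in>Pi\<^sub>E {..<n} A. \<Sum>c\<in>A n. F (\<tau>(n := c)))"
proof -
  have "(\<Sum>\<tau>\<in>Pi\<^sub>E {..<Suc n} A. F \<tau>) = (\<Sum>(c, \<tau>)\<in>A n \<times> Pi\<^sub>E {..<n} A. F (\<tau>(n := c)))"
    unfolding lessThan_Suc PiE_insert_eq
    by (subst sum.reindex) (auto simp: inj_combinator case_prod_beta)
  also have "\<dots> = (\<Sum>\<tau>\<in>Pi\<^sub>E {..<n} A. \<Sum>c\<in>A n. F (\<tau>(n := c)))"
    by (subst sum.swap) (simp add: sum.cartesian_product)
  finally show ?thesis .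
qed

locale rademacher_seq = prob_space M for M :: "'s measure" +
  fixes W :: "nat \<Rightarrow> 's \<Rightarrow> real" and \<omega> :: real
  assumes W_measurable: "\<And>i. W i \<in> borel_measurable M"
    and W_indep: "indep_vars (\<lambda>_. borel) W UNIV"
    and W_values: "\<And>i s. s \<in> space M \<Longrightarrow> W i s = - \<omega> \<or> W i s = \<omega>"
    and prob_W_eq_pos: "\<And>i. prob {s \<in> space M. W i s = \<omega>} = 1/2"
    and prob_W_eq_neg: "\<And>i. prob {s \<in> space M. W i s = - \<omega>} = 1/2"
begin

lemma omega_nonzero: "\<omega> \<noteq> 0"
proof
  assume "\<omega> = 0"
  then have "{s \<in> space M. W 0 s = \<omega>} = space M"
    using W_values by auto
  then show False
    using prob_W_eq_pos[of 0] by (simp add: prob_space)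
qed

lemma integral_even_fun:
  fixes f :: "real \<Rightarrow> real"
  assumes "\<And>v. f (- v) = f v"
  shows "(\<integral>s. f (W i s) \<partial>M) = f \<omega>"
proof -
  have "f (W i s) = f \<omega>" if "s \<in> space M" for s
    using W_values[OF that, of i] assms[of \<omega>] by auto
  then have "(\<integral>s. f (W i s) \<partial>M) = (\<integral>s. f \<omega> \<partial>M)"
    by (intro Bochner_Integration.integral_cong) auto
  then show ?thesis
    by (simp add: prob_space)
qed

definition sign_patterns :: "nat \<Rightarrow> (nat \<Rightarrow> real) set" where
  "sign_patterns m = Pi\<^sub>E {..<m} (\<lambda>_. {- \<omega>, \<omega>})"

definition prefix_event :: "nat \<Rightarrow> (nat \<Rightarrow> real) \<Rightarrow> 's set" where
  "prefix_event m \<tau> = {s \<in> space M. \<forall>i<m. W i s = \<tau> i}"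

lemma prefix_event_in_events: "prefix_event m \<tau> \<in> events"
  unfolding prefix_event_def using W_measurable by measurable

lemma prob_prefix_event:
  assumes "\<tau> \<in> sign_patterns m"
  shows "prob (prefix_event m \<tau>) = 1 / 2 ^ m"
proof (cases "m = 0")
  case True
  then show ?thesis by (simp add: prefix_event_def prob_space)
next
  case False
  have indep: "indep_events (\<lambda>i. {s \<in> space M. W i s = \<tau> i}) UNIV"
    by (rule indep_eventsI_indep_vars[OF W_indep]) simp
  have "prefix_event m \<tau> = (\<Inter>i\<in>{..<m}. {s \<in> space M. W i s = \<tau> i})"
    using False by (auto simp: prefix_event_def)
  also have "prob \<dots> = (\<Prod>i<m. prob {s \<in> space M. W i s = \<tau> i})"
    using False by (intro conjunct2[OF indep[unfolded indep_events_def], rule_format]) auto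
  also have "\<dots> = (\<Prod>i<m. 1 / 2)"
  proof (rule prod.cong)
    fix i assume "i \<in> {..<m}"
    then have "\<tau> i \<in> {- \<omega>, \<omega>}"
      using assms by (auto simp: sign_patterns_def)
    then show "prob {s \<in> space M. W i s = \<tau> i} = 1 / 2"
      using prob_W_eq_pos prob_W_eq_neg by auto
  qed simp
  finally show ?thesis by (simp add: power_one_over)
qed

lemma prefix_determined_eq_sum:
  fixes F :: "(nat \<Rightarrow> real) \<Rightarrow> real"
  assumes "prefix_determined m F" and s: "s \<in> space M"
  shows "F (\<lambda>i. W i s) = (\<Sum>\<tau>\<in>sign_patterns m. F \<tau> * indicator (prefix_event m \<tau>) s)"
proof -
  define \<sigma> where "\<sigma> = restrict (\<lambda>i. W i s) {..<m}"
  have \<sigma>: "\<sigma> \<in> sign_patterns m"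
    using W_values[OF s] by (auto simp: \<sigma>_def sign_patterns_def)
  have "s \<in> prefix_event m \<tau> \<longleftrightarrow> \<tau> = \<sigma>" if "\<tau> \<in> sign_patterns m" for \<tau>
    using that s by (auto simp: prefix_event_def \<sigma>_def sign_patterns_def PiE_iff extensional_def)
  then have "(\<Sum>\<tau>\<in>sign_patterns m. F \<tau> * indicator (prefix_event m \<tau>) s)
      = (\<Sum>\<tau>\<in>sign_patterns m. if \<tau> = \<sigma> then F \<tau> else 0)"
    by (intro sum.cong) auto
  also have "\<dots> = F \<sigma>"
    using \<sigma> by (simp add: sign_patterns_def finite_PiE)
  also have "\<dots> = F (\<lambda>i. W i s)"
    using assms(1) by (auto simp: prefix_determined_def \<sigma>_def)
  finally show ?thesis by simp
qed

lemma
  fixes F :: "(nat \<Rightarrow> real) \<Rightarrow> real"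
  assumes "prefix_determined m F"
  shows integrable_prefix_determined: "integrable M (\<lambda>s. F (\<lambda>i. W i s))"
    and integral_prefix_determined:
      "(\<integral>s. F (\<lambda>i. W i s) \<partial>M) = (\<Sum>\<tau>\<in>sign_patterns m. F \<tau>) / 2 ^ m"
proof -
  let ?G = "\<lambda>s. \<Sum>\<tau>\<in>sign_patterns m. F \<tau> * indicator (prefix_event m \<tau>) s"
  have eq: "(\<lambda>s. F (\<lambda>i. W i s)) \<in> space M \<rightarrow> UNIV" "\<And>s. s \<in> space M \<Longrightarrow> F (\<lambda>i. W i s) = ?G s"
    using prefix_determined_eq_sum[OF assms] by auto
  have G: "integrable M ?G"
    by (intro Bochner_Integration.integrable_sum integrable_mult_right integrable_real_indicator
        prefix_event_in_events) (simp add: emeasure_eq_measure)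
  then show "integrable M (\<lambda>s. F (\<lambda>i. W i s))"
    using eq(2) by (subst Bochner_Integration.integrable_cong[OF refl]) auto
  have "(\<integral>s. F (\<lambda>i. W i s) \<partial>M) = integral\<^sup>L M ?G"
    using eq(2) by (intro Bochner_Integration.integral_cong) auto
  also have "\<dots> = (\<Sum>\<tau>\<in>sign_patterns m. F \<tau> * prob (prefix_event m \<tau>))"
    using prefix_event_in_events
    by (subst Bochner_Integration.integral_sum)
      (auto intro!: integrable_mult_right integrable_real_indicator simp: emeasure_eq_measure)
  also have "\<dots> = (\<Sum>\<tau>\<in>sign_patterns m. F \<tau>) / 2 ^ m"
    by (simp add: prob_prefix_event sum_divide_distrib)
  finally show "(\<integral>s. F (\<lambda>i. W i s) \<partial>M) = (\<Sum>\<tau>\<in>sign_patterns m. F \<tau>) / 2 ^ m" .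
qed

lemma integral_eq_0_if_odd_in_last_coin:
  fixes F :: "(nat \<Rightarrow> real) \<Rightarrow> real"
  assumes "prefix_determined (Suc n) F" and "\<And>w. F (w(n := \<omega>)) + F (w(n := - \<omega>)) = 0"
  shows "(\<integral>s. F (\<lambda>i. W i s) \<partial>M) = 0"
proof -
  have "(\<Sum>\<tau>\<in>sign_patterns (Suc n). F \<tau>) = (\<Sum>\<tau>\<in>sign_patterns n. F (\<tau>(n := - \<omega>)) + F (\<tau>(n := \<omega>)))"
    using omega_nonzero by (simp add: sign_patterns_def sum_PiE_lessThan_Suc)
  also have "\<dots> = 0"
    using assms(2) by (simp add: add.commute)
  finally show ?thesis
    by (simp add: integral_prefix_determined[OF assms(1)])
qed

end

locale trajectory =
  fixes rho beta eps :: real and J h g :: "real \<Rightarrow> real" and x0 y0 y1 :: real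
begin

abbreviation "traj_x \<equiv> xseq rho beta eps J h g x0 y0 y1"
abbreviation "traj_y \<equiv> yseq rho beta eps J h g x0 y0 y1"

lemma traj_eq_if_prefix_eq:
  assumes "\<forall>i<m. w i = w' i" and "n \<le> m"
  shows "traj_x w n = traj_x w' n \<and> traj_y w n = traj_y w' n \<and> traj_y w (Suc n) = traj_y w' (Suc n)"
  using assms(2)
proof (induction n)
  case 0
  show ?case by simp
next
  case (Suc n)
  moreover have "w n = w' n"
    using assms(1) Suc.prems by simp
  ultimately show ?case by simp
qed

lemma traj_fun_upd:
  "j \<le> n \<Longrightarrow> traj_x (w(n := c)) j = traj_x w j"
  "j \<le> n \<Longrightarrow> traj_y (w(n := c)) j = traj_y w j"
  "traj_y (w(n := c)) (Suc n) = traj_y w (Suc n)"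
  using traj_eq_if_prefix_eq[of n "w(n := c)" w] by auto

lemma prefix_determined_traj:
  "prefix_determined (Suc n)
     (\<lambda>w. H (traj_x w n) (traj_x w (Suc n)) (traj_y w n) (traj_y w (Suc n)) (traj_y w (Suc (Suc n))))"
  unfolding prefix_determined_def
proof (intro allI impI)
  fix w w' :: "nat \<Rightarrow> real"
  assume agree: "\<forall>i<Suc n. w i = w' i"
  from traj_eq_if_prefix_eq[OF agree le_SucI[OF order_refl]] traj_eq_if_prefix_eq[OF agree order_refl]
  show "H (traj_x w n) (traj_x w (Suc n)) (traj_y w n) (traj_y w (Suc n)) (traj_y w (Suc (Suc n)))
      = H (traj_x w' n) (traj_x w' (Suc n)) (traj_y w' n) (traj_y w' (Suc n)) (traj_y w' (Suc (Suc n)))"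
    by (simp only:)
qed

end

(* The right-hand side of the y-identity before taking expectations; x_cur, y_cur stand for
   x_k - xstar and y_k, and x_prev, y_prev for x_(k-1) - xstar and y_(k-1). *)
definition y_square_rhs :: "real \<Rightarrow> real \<Rightarrow> real \<Rightarrow> real \<Rightarrow> real \<Rightarrow> real \<Rightarrow> real
    \<Rightarrow> real \<Rightarrow> real \<Rightarrow> real \<Rightarrow> real \<Rightarrow> real" where
  "y_square_rhs rho beta mu eps chi gam psi x_cur x_prev y_prev y_cur =
     (1 - beta)^2 * y_cur^2 + 2 * (1 - beta) * mu * gam * (x_cur * y_cur)
     + mu^2 * (rho^2 * chi + gam^2) * x_prev^2
     - mu^2 * rho * (3 * gam^2 + rho^2 * chi) * (x_prev * y_prev)
     + mu^2 * (rho^4 * chi + gam^2 * psi + 6 * gam^2 * rho^2) / 4 * y_prev^2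
     + mu^2 * eps * (gam^2 * psi / 4 * (eps + 2 * \<bar>y_prev\<bar>)
        - rho^2 * chi / 2 * (T1 y_prev eps * (x_cur^2 + x_prev^2))
        + rho^2 * (rho^2 * chi + 2 * gam^2) / 4 * (T1 y_prev eps * y_prev^2)
        + rho^2 * gam^2 / 2 * T2 y_prev eps)"

lemma y_step_square_flip_sum:
  fixes a b x_prev y_prev y_cur rho beta mu eps :: real
  assumes "\<bar>y_prev\<bar> + eps \<noteq> 0"
  defines "x_cur c \<equiv> x_prev - rho * y_prev + (\<bar>y_prev\<bar> + eps) * c"
  defines "y_next a' c \<equiv> (1 - beta) * y_cur + a' / (\<bar>y_prev\<bar> + eps) * (mu / 2 * x_cur c ^ 2 - mu / 2 * x_prev ^ 2)"
  shows "(y_next a b ^ 2 - y_square_rhs rho beta mu eps (a^2) (a * b) (b^2) (x_cur b) x_prev y_prev y_cur)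
       + (y_next (- a) (- b) ^ 2 - y_square_rhs rho beta mu eps (a^2) (a * b) (b^2) (x_cur (- b)) x_prev y_prev y_cur) = 0"
proof -
  \<comment> \<open>Naming \<bar>y_prev\<bar> lets the Groebner basis method treat it as an unknown t with t^2 = y_prev^2.\<close>
  obtain t where t: "\<bar>y_prev\<bar> = t" by blast
  have "y_prev^2 = t^2" by (simp add: t[symmetric])
  with assms(1) show ?thesis
    unfolding x_cur_def y_next_def y_square_rhs_def T1_def T2_def t
    by (simp add: field_simps) algebra
qed

lemma x_step_square_flip_sum:
  fixes b x_prev y_prev rho eps :: real
  shows "(x_prev - rho * y_prev + (\<bar>y_prev\<bar> + eps) * b)^2 + (x_prev - rho * y_prev + (\<bar>y_prev\<bar> + eps) * (- b))^2
    = 2 * (x_prev^2 + (b^2 + rho^2) * y_prev^2 - 2 * rho * (x_prev * y_prev) + eps * b^2 * (eps + 2 * \<bar>y_prev\<bar>))"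
proof -
  have "y_prev^2 = \<bar>y_prev\<bar>^2" by simp
  then show ?thesis by algebra
qed

locale quadratic_trajectory = rademacher_seq M W \<omega> + trajectory rho beta eps J h g x0 y0 y1
  for M :: "'s measure" and W \<omega> rho beta eps J h g x0 y0 y1 +
  fixes \<mu> xstar Jstar :: real
  assumes eps_pos: "eps > 0"
    and h_odd: "\<And>v. h (- v) = - h v" and g_odd: "\<And>v. g (- v) = - g v"
    and J_eq: "J = (\<lambda>x. Jstar + \<mu> / 2 * (x - xstar)^2)"
begin

abbreviation X :: "nat \<Rightarrow> 's \<Rightarrow> real" where
  "X n s \<equiv> traj_x (\<lambda>i. W i s) n - xstar"

abbreviation Y :: "nat \<Rightarrow> 's \<Rightarrow> real" where
  "Y n s \<equiv> traj_y (\<lambda>i. W i s) n"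

lemma J_diff: "J p - J q = \<mu> / 2 * (p - xstar)^2 - \<mu> / 2 * (q - xstar)^2"
  by (simp add: J_eq)

lemma integrable_traj:
  fixes H :: "real \<Rightarrow> real \<Rightarrow> real \<Rightarrow> real \<Rightarrow> real \<Rightarrow> real"
  shows "integrable M (\<lambda>s. H (X n s) (X (Suc n) s) (Y n s) (Y (Suc n) s) (Y (Suc (Suc n)) s))"
  using integrable_prefix_determined[OF prefix_determined_traj[of n "\<lambda>a b. H (a - xstar) (b - xstar)"]]
  by simp

lemma integral_X_Suc_square:
  "(\<integral>s. X (Suc n) s ^ 2 \<partial>M) = (\<integral>s. X n s ^ 2 \<partial>M) + ((g \<omega>)^2 + rho^2) * (\<integral>s. Y n s ^ 2 \<partial>M)
     - 2 * rho * (\<integral>s. X n s * Y n s \<partial>M) + eps * (g \<omega>)^2 * (eps + 2 * (\<integral>s. \<bar>Y n s\<bar> \<partial>M))"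
proof -
  define Q where "Q x y = x^2 + ((g \<omega>)^2 + rho^2) * y^2 - 2 * rho * (x * y)
    + eps * (g \<omega>)^2 * (eps + 2 * \<bar>y\<bar>)" for x y
  have "(\<integral>s. X (Suc n) s ^ 2 - Q (X n s) (Y n s) \<partial>M) = 0"
  proof (rule integral_eq_0_if_odd_in_last_coin)
    show "prefix_determined (Suc n) (\<lambda>w. (traj_x w (Suc n) - xstar)^2 - Q (traj_x w n - xstar) (traj_y w n))"
      using prefix_determined_traj[of n "\<lambda>x x' y _ _. (x' - xstar)^2 - Q (x - xstar) y"] by simp
    fix w :: "nat \<Rightarrow> real"
    show "(traj_x (w(n := \<omega>)) (Suc n) - xstar)^2 - Q (traj_x (w(n := \<omega>)) n - xstar) (traj_y (w(n := \<omega>)) n)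
        + ((traj_x (w(n := - \<omega>)) (Suc n) - xstar)^2 - Q (traj_x (w(n := - \<omega>)) n - xstar) (traj_y (w(n := - \<omega>)) n)) = 0"
      using x_step_square_flip_sum[of "traj_x w n - xstar" rho "traj_y w n" eps "g \<omega>"]
      by (simp add: traj_fun_upd hat_g_def g_odd Q_def algebra_simps)
  qed
  moreover have "integrable M (\<lambda>s. X (Suc n) s ^ 2)" "integrable M (\<lambda>s. X n s ^ 2)"
    "integrable M (\<lambda>s. Y n s ^ 2)" "integrable M (\<lambda>s. X n s * Y n s)" "integrable M (\<lambda>s. \<bar>Y n s\<bar>)"
    by (rule integrable_traj)+
  ultimately show ?thesis
    by (simp add: Q_def prob_space)
qed

lemma integral_Y_Suc_Suc_square:
  "(\<integral>s. Y (Suc (Suc n)) s ^ 2 \<partial>M) = (\<integral>s. y_square_rhs rho beta \<mu> eps ((h \<omega>)^2) (h \<omega> * g \<omega>) ((g \<omega>)^2)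
      (X (Suc n) s) (X n s) (Y n s) (Y (Suc n) s) \<partial>M)"
proof -
  let ?R = "y_square_rhs rho beta \<mu> eps ((h \<omega>)^2) (h \<omega> * g \<omega>) ((g \<omega>)^2)"
  have "(\<integral>s. Y (Suc (Suc n)) s ^ 2 - ?R (X (Suc n) s) (X n s) (Y n s) (Y (Suc n) s) \<partial>M) = 0"
  proof (rule integral_eq_0_if_odd_in_last_coin)
    show "prefix_determined (Suc n) (\<lambda>w. traj_y w (Suc (Suc n)) ^ 2
        - ?R (traj_x w (Suc n) - xstar) (traj_x w n - xstar) (traj_y w n) (traj_y w (Suc n)))"
      using prefix_determined_traj[of n "\<lambda>x x' y y' y''. y''^2 - ?R (x' - xstar) (x - xstar) y y'"]
      by simp
    fix w :: "nat \<Rightarrow> real"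
    have x_Suc_upd: "traj_x (w(n := c)) (Suc n) - xstar
        = (traj_x w n - xstar) - rho * traj_y w n + (\<bar>traj_y w n\<bar> + eps) * g c" for c
      by (simp add: traj_fun_upd hat_g_def)
    have y_Suc_Suc_upd: "traj_y (w(n := c)) (Suc (Suc n)) = (1 - beta) * traj_y w (Suc n)
        + h c / (\<bar>traj_y w n\<bar> + eps) * (\<mu> / 2 * (traj_x (w(n := c)) (Suc n) - xstar)^2
                                          - \<mu> / 2 * (traj_x w n - xstar)^2)" for c
      by (simp add: traj_fun_upd hat_h_def J_diff)
    have "\<bar>traj_y w n\<bar> + eps \<noteq> 0"
      using eps_pos by simp
    from y_step_square_flip_sum[OF this, where a = "h \<omega>" and b = "g \<omega>" and x_prev = "traj_x w n - xstar"
        and y_cur = "traj_y w (Suc n)" and rho = rho and beta = beta and mu = \<mu>]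
    show "traj_y (w(n := \<omega>)) (Suc (Suc n)) ^ 2 - ?R (traj_x (w(n := \<omega>)) (Suc n) - xstar)
          (traj_x (w(n := \<omega>)) n - xstar) (traj_y (w(n := \<omega>)) n) (traj_y (w(n := \<omega>)) (Suc n))
        + (traj_y (w(n := - \<omega>)) (Suc (Suc n)) ^ 2 - ?R (traj_x (w(n := - \<omega>)) (Suc n) - xstar)
          (traj_x (w(n := - \<omega>)) n - xstar) (traj_y (w(n := - \<omega>)) n) (traj_y (w(n := - \<omega>)) (Suc n))) = 0"
      unfolding y_Suc_Suc_upd x_Suc_upd by (simp add: traj_fun_upd h_odd g_odd)
  qed
  moreover have "integrable M (\<lambda>s. Y (Suc (Suc n)) s ^ 2)"
    "integrable M (\<lambda>s. ?R (X (Suc n) s) (X n s) (Y n s) (Y (Suc n) s))"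
    by (rule integrable_traj)+
  ultimately show ?thesis
    by simp
qed

lemma integral_y_square_rhs:
  "(\<integral>s. y_square_rhs rho beta \<mu> eps chi gam psi (X (Suc n) s) (X n s) (Y n s) (Y (Suc n) s) \<partial>M)
   = (1 - beta)^2 * (\<integral>s. Y (Suc n) s ^ 2 \<partial>M)
     + 2 * (1 - beta) * \<mu> * gam * (\<integral>s. X (Suc n) s * Y (Suc n) s \<partial>M)
     + \<mu>^2 * (rho^2 * chi + gam^2) * (\<integral>s. X n s ^ 2 \<partial>M)
     - \<mu>^2 * rho * (3 * gam^2 + rho^2 * chi) * (\<integral>s. X n s * Y n s \<partial>M)
     + \<mu>^2 * (rho^4 * chi + gam^2 * psi + 6 * gam^2 * rho^2) / 4 * (\<integral>s. Y n s ^ 2 \<partial>M)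
     + \<mu>^2 * eps * (gam^2 * psi / 4 * (eps + 2 * (\<integral>s. \<bar>Y n s\<bar> \<partial>M))
        - rho^2 * chi / 2 * (\<integral>s. T1 (Y n s) eps * (X (Suc n) s ^ 2 + X n s ^ 2) \<partial>M)
        + rho^2 * (rho^2 * chi + 2 * gam^2) / 4 * (\<integral>s. T1 (Y n s) eps * Y n s ^ 2 \<partial>M)
        + rho^2 * gam^2 / 2 * (\<integral>s. T2 (Y n s) eps \<partial>M))"
proof -
  have "integrable M (\<lambda>s. Y (Suc n) s ^ 2)" "integrable M (\<lambda>s. X (Suc n) s * Y (Suc n) s)"
    "integrable M (\<lambda>s. X n s ^ 2)" "integrable M (\<lambda>s. X n s * Y n s)" "integrable M (\<lambda>s. Y n s ^ 2)"
    "integrable M (\<lambda>s. \<bar>Y n s\<bar>)" "integrable M (\<lambda>s. T1 (Y n s) eps * (X (Suc n) s ^ 2 + X n s ^ 2))"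
    "integrable M (\<lambda>s. T1 (Y n s) eps * Y n s ^ 2)" "integrable M (\<lambda>s. T2 (Y n s) eps)"
    by (rule integrable_traj)+
  then show ?thesis
    by (simp add: y_square_rhs_def prob_space)
qed

end

theorem lemma7:
  fixes M :: "'s measure" and W :: "nat \<Rightarrow> 's \<Rightarrow> real"
    and rho beta eps \<omega> \<mu> xstar Jstar x0 y0 y1 :: real
    and J h g :: "real \<Rightarrow> real" and k :: nat
  assumes "prob_space M"
    and "rho > 0" and "0 < beta" and "beta < 2" and "eps > 0" and "\<omega> > 0"
    and "\<And>i. W i \<in> borel_measurable M"
    and "prob_space.indep_vars M (\<lambda>_. borel) W UNIV"
    and "\<And>i s. s \<in> space M \<Longrightarrow> W i s = - \<omega> \<or> W i s = \<omega>"
    and "\<And>i. measure M {s \<in> space M. W i s = \<omega>} = 1/2"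
    and "\<And>i. measure M {s \<in> space M. W i s = - \<omega>} = 1/2"
    and "\<And>v. h (- v) = - h v" and "\<And>v. g (- v) = - g v"
    and "\<And>v. sgn (g v) = sgn (h v)"
    and "\<And>v. g v = 0 \<longleftrightarrow> v = 0" and "\<And>v. h v = 0 \<longleftrightarrow> v = 0"
    and "\<mu> > 0"
    and "J = (\<lambda>x. Jstar + \<mu> / 2 * (x - xstar)^2)"
    and "k \<ge> 1"
  shows
   "let X = (\<lambda>n s. xseq rho beta eps J h g x0 y0 y1 (\<lambda>i. W i s) n - xstar);
        Y = (\<lambda>n s. yseq rho beta eps J h g x0 y0 y1 (\<lambda>i. W i s) n);
        E = (\<lambda>f. integral\<^sup>L M f);
        chi = E (\<lambda>s. h (W k s)^2);
        psi = E (\<lambda>s. g (W k s)^2);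
        gam = E (\<lambda>s. h (W k s) * g (W k s));
        Ry = \<mu>^2 * eps * (gam^2 * psi / 4 * (eps + 2 * E (\<lambda>s. \<bar>Y (k-1) s\<bar>))
              - rho^2 * chi / 2 * E (\<lambda>s. T1 (Y (k-1) s) eps * (X k s ^ 2 + X (k-1) s ^ 2))
              + rho^2 * (rho^2 * chi + 2 * gam^2) / 4 * E (\<lambda>s. T1 (Y (k-1) s) eps * Y (k-1) s ^ 2)
              + rho^2 * gam^2 / 2 * E (\<lambda>s. T2 (Y (k-1) s) eps))
    in E (\<lambda>s. X (k+1) s ^ 2) = E (\<lambda>s. X k s ^ 2) + (psi + rho^2) * E (\<lambda>s. Y k s ^ 2)
          - 2 * rho * E (\<lambda>s. X k s * Y k s) + eps * psi * (eps + 2 * E (\<lambda>s. \<bar>Y k s\<bar>))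
     \<and> E (\<lambda>s. Y (k+1) s ^ 2) = (1 - beta)^2 * E (\<lambda>s. Y k s ^ 2)
          + 2 * (1 - beta) * \<mu> * gam * E (\<lambda>s. X k s * Y k s)
          + \<mu>^2 * (rho^2 * chi + gam^2) * E (\<lambda>s. X (k-1) s ^ 2)
          - \<mu>^2 * rho * (3 * gam^2 + rho^2 * chi) * E (\<lambda>s. X (k-1) s * Y (k-1) s)
          + \<mu>^2 * (rho^4 * chi + gam^2 * psi + 6 * gam^2 * rho^2) / 4 * E (\<lambda>s. Y (k-1) s ^ 2)
          + Ry"
proof -
  interpret quadratic_trajectory M W \<omega> rho beta eps J h g x0 y0 y1 \<mu> xstar Jstar
    by (intro quadratic_trajectory.intro rademacher_seq.intro rademacher_seq_axioms.intro
        quadratic_trajectory_axioms.intro) (fact assms)+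
  obtain n where k: "k = Suc n"
    using \<open>k \<ge> 1\<close> by (cases k) auto
  have chi: "(\<integral>s. h (W k s)^2 \<partial>M) = (h \<omega>)^2"
    and psi: "(\<integral>s. g (W k s)^2 \<partial>M) = (g \<omega>)^2"
    and gam: "(\<integral>s. h (W k s) * g (W k s) \<partial>M) = h \<omega> * g \<omega>"
    by (rule integral_even_fun; simp add: h_odd g_odd)+
  show ?thesis
    unfolding Let_def chi psi gam
    using integral_X_Suc_square[of k] integral_Y_Suc_Suc_square[of n]
      integral_y_square_rhs[of "(h \<omega>)^2" "h \<omega> * g \<omega>" "(g \<omega>)^2" n]
    by (simp add: k)
qed

end
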